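(* Let $D=d$ and let ${\bf v}=\{v_1,\dots,v_d\}$ be linearly independent unit vectors in $\mathbb{R}^d$ such that for every $i\in\{1,\dots,d\}$ the tuple ${\bf v}\setminus i$ is completely irrational, i.e. $\overline{A_{{\bf v}\setminus i}(\mathcal{L}_{{\bf v}\setminus i})}=[0,\infty)^{d-1}$. Then for every $i\in\{1,\dots,d\}$ and all $M,\epsilon>0$ the set $$\Lambda_{M,\epsilon,i}:=\{n\in\mathbb{Z}^D:\ 0<v_k\cdot n<\epsilon\ \forall k\neq i,\ \ v_i\cdot n>M\}$$ is non-empty.
   Context: ${\bf v}\setminus i:=\{v_k\}_{k\ne i}$, $\mathcal{L}_{{\bf v}\setminus i}:=\{n\in\mathbb{Z}^D: v_k\cdot n\ge0\ \forall k\ne i\}$, and $A_{{\bf v}\setminus i}:\mathbb{R}^D\to\mathbb{R}^{d-1}$, $z\mapsto(v_k\cdot z)_{k\ne i}$. *)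

theory Defs
  imports "HOL-Analysis.Analysis"
begin

definition int_lattice :: "(real^'d) set" where
  "int_lattice = {n. \<forall>j. n $ j \<in> \<int>}"

definition lattice_cone :: "('d \<Rightarrow> real^'d) \<Rightarrow> 'd \<Rightarrow> (real^'d) set" where
  "lattice_cone v i = {n \<in> int_lattice. \<forall>k. k \<noteq> i \<longrightarrow> v k \<bullet> n \<ge> 0}"

text \<open>A_{v \ i}: z \<mapsto> (v_k . z)_{k \<noteq> i}. The target R^{d-1} is identified with the
  coordinate hyperplane {x. x $ i = 0} of R^d (the i-th coordinate is set to 0).\<close>
definition A_map :: "('d \<Rightarrow> real^'d) \<Rightarrow> 'd \<Rightarrow> real^'d \<Rightarrow> real^'d" where
  "A_map v i z = (\<chi> k. if k = i then 0 else v k \<bullet> z)"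

definition nonneg_orthant_without :: "'d \<Rightarrow> (real^'d) set" where
  "nonneg_orthant_without i = {x. x $ i = 0 \<and> (\<forall>k. k \<noteq> i \<longrightarrow> x $ k \<ge> 0)}"

definition completely_irrational_without :: "('d \<Rightarrow> real^'d) \<Rightarrow> 'd \<Rightarrow> bool" where
  "completely_irrational_without v i \<longleftrightarrow>
     closure (A_map v i ` lattice_cone v i) = nonneg_orthant_without i"

definition Lambda_set :: "('d \<Rightarrow> real^'d) \<Rightarrow> real \<Rightarrow> real \<Rightarrow> 'd \<Rightarrow> (real^'d) set" where
  "Lambda_set v M \<epsilon> i = {n \<in> int_lattice.
      (\<forall>k. k \<noteq> i \<longrightarrow> 0 < v k \<bullet> n \<and> v k \<bullet> n < \<epsilon>) \<and> v i \<bullet> n > M}"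

end

theory Submission
  imports Defs
begin

text \<open>Complete irrationality makes the image of the slab
  \<open>S\<^sub>\<delta> = {n \<in> \<int>\<^sup>d. 0 < v\<^sub>k \<cdot> n < \<delta> for all k \<noteq> i}\<close> dense in the open box \<open>(0,\<delta>)\<^sup>d\<^sup>-\<^sup>1\<close>,
  so \<open>S\<^sub>\<delta>\<close> is infinite. Since the \<open>v\<^sub>k\<close> form a basis, only finitely many lattice points have
  all \<open>|v\<^sub>k \<cdot> n|\<close> bounded, hence \<open>|v\<^sub>i \<cdot> n|\<close> is unbounded on \<open>S\<^sub>\<delta>\<close>. A point \<open>n \<in> S\<^sub>\<epsilon>\<^sub>/\<^sub>4\<close> with
  \<open>v\<^sub>i \<cdot> n\<close> very large lies in \<open>\<Lambda>\<close>; if instead \<open>v\<^sub>i \<cdot> n\<close> is very negative, then \<open>m - n\<close> does,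
  where \<open>m\<close> is a lattice point with \<open>\<epsilon>/4 < v\<^sub>k \<cdot> m < \<epsilon>\<close> for all \<open>k \<noteq> i\<close>, which exists by
  complete irrationality again.\<close>

definition lattice_slab :: "('d \<Rightarrow> real^'d) \<Rightarrow> 'd \<Rightarrow> real \<Rightarrow> (real^'d) set" where
  "lattice_slab v i \<delta> = {n \<in> int_lattice. \<forall>k. k \<noteq> i \<longrightarrow> 0 < v k \<bullet> n \<and> v k \<bullet> n < \<delta>}"

lemma infinite_int_lattice: "infinite (int_lattice :: (real^'d::finite) set)"
proof -
  have "inj (\<lambda>z::int. \<chi> _::'d. real_of_int z)"
    by (auto intro!: injI simp: vec_eq_iff)
  moreover have "range (\<lambda>z::int. \<chi> _::'d. real_of_int z) \<subseteq> int_lattice"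
    by (auto simp: int_lattice_def)
  ultimately show ?thesis
    by (meson finite_imageD finite_subset infinite_UNIV_int)
qed

lemma finite_int_lattice_Int_bounded:
  fixes S :: "(real^'d::finite) set"
  assumes "bounded S"
  shows "finite (int_lattice \<inter> S)"
proof -
  obtain b where b: "\<And>x. x \<in> S \<Longrightarrow> norm x \<le> b"
    using assms by (auto simp: bounded_pos)
  define F where "F = {k \<in> \<int>. \<bar>k\<bar> \<le> b}"
  have "int_lattice \<inter> S \<subseteq> vec_lambda ` (\<Pi>\<^sub>E j\<in>UNIV. F)"
  proof
    fix n assume n: "n \<in> int_lattice \<inter> S"
    have "n $ j \<in> F" for j
      using n b[of n] component_le_norm_cart[of n j] by (auto simp: F_def int_lattice_def)
    then show "n \<in> vec_lambda ` (\<Pi>\<^sub>E j\<in>UNIV. F)"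
      by (intro rev_image_eqI[of "vec_nth n"]) auto
  qed
  moreover have "finite (vec_lambda ` (\<Pi>\<^sub>E j\<in>UNIV. F))"
    using finite_abs_int_segment[of b] by (simp add: F_def finite_PiE)
  ultimately show ?thesis
    by (rule finite_subset)
qed

lemma span_range_eq_UNIV:
  fixes v :: "'d::finite \<Rightarrow> real^'d"
  assumes "inj v" and "independent (range v)"
  shows "span (range v) = UNIV"
proof -
  have "dim (UNIV :: (real^'d) set) \<le> card (range v)"
    using assms(1) by (simp add: card_image)
  then show ?thesis
    using card_ge_dim_independent[of "range v" UNIV] assms(2) by auto
qed

lemma bounded_inner_le:
  fixes v :: "'d::finite \<Rightarrow> real^'d"
  assumes span: "span (range v) = UNIV"
  shows "bounded {x. \<forall>k. \<bar>v k \<bullet> x\<bar> \<le> R}"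
proof -
  define T where "T x = (\<chi> k. v k \<bullet> x)" for x :: "real^'d"
  have "linear T"
    unfolding T_def by (auto simp: linear_iff vec_eq_iff inner_add_right)
  moreover have "inj T"
  proof (rule injI)
    fix x y assume "T x = T y"
    then have "\<forall>w\<in>range v. orthogonal (x - y) w"
      by (auto simp: T_def vec_eq_iff orthogonal_def inner_diff_right inner_commute)
    then have "orthogonal (x - y) (x - y)"
      using orthogonal_to_span span by blast
    then show "x = y"
      by (simp add: orthogonal_def)
  qed
  ultimately obtain B where B: "B > 0" "\<And>x. B * norm x \<le> norm (T x)"
    using linear_inj_bounded_below_pos by blast
  have "norm x \<le> CARD('d) * R / B" if x: "\<forall>k. \<bar>v k \<bullet> x\<bar> \<le> R" for x
  proof -
    have "B * norm x \<le> (\<Sum>k\<in>UNIV. \<bar>T x $ k\<bar>)"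
      using B(2) norm_le_l1_cart order_trans by blast
    also have "\<dots> \<le> (\<Sum>k\<in>(UNIV::'d set). R)"
      using x by (intro sum_mono) (simp add: T_def)
    finally show ?thesis
      using B(1) by (simp add: field_simps)
  qed
  then show ?thesis
    by (auto simp: bounded_iff)
qed

lemma infinite_Int_if_infinite_Int_closure:
  fixes U T :: "'a::t1_space set"
  assumes "open U" and "infinite (U \<inter> closure T)"
  shows "infinite (U \<inter> T)"
  using assms closure_subset open_Int_closure_subset[of U T]
  by (metis closure_closed finite_imp_closed finite_subset)

lemma infinite_lattice_slab:
  fixes v :: "'d::finite \<Rightarrow> real^'d"
  assumes ci: "completely_irrational_without v i" and "\<delta> > 0"
  shows "infinite (lattice_slab v i \<delta>)"
proof (cases "\<exists>j. j \<noteq> i")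
  case True
  then obtain j where j: "j \<noteq> i" by blast
  define U where "U = (\<Inter>k\<in>-{i}. {x::real^'d. 0 < x $ k} \<inter> {x. x $ k < \<delta>})"
  have "open U"
    unfolding U_def by (intro open_INT finite open_Int ballI
        open_halfspace_component_lt_cart open_halfspace_component_gt_cart)
  define diag where "diag t = (\<chi> k. if k = i then 0 else t)" for t :: real
  have "inj_on diag {0<..<\<delta>}"
  proof (rule inj_onI)
    fix s t assume "diag s = diag t"
    then have "diag s $ j = diag t $ j" by simp
    then show "s = t" using j by (simp add: diag_def)
  qed
  then have "infinite (diag ` {0<..<\<delta>})"
    using \<open>\<delta> > 0\<close> by (simp add: finite_image_iff)
  moreover have "diag ` {0<..<\<delta>} \<subseteq> U \<inter> nonneg_orthant_without i"
    by (auto simp: diag_def U_def nonneg_orthant_without_def)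
  ultimately have "infinite (U \<inter> nonneg_orthant_without i)"
    using finite_subset by blast
  then have "infinite (U \<inter> closure (A_map v i ` lattice_cone v i))"
    using ci by (simp add: completely_irrational_without_def)
  then have "infinite (U \<inter> A_map v i ` lattice_cone v i)"
    by (rule infinite_Int_if_infinite_Int_closure[OF \<open>open U\<close>])
  moreover have "U \<inter> A_map v i ` lattice_cone v i \<subseteq> A_map v i ` lattice_slab v i \<delta>"
  proof
    fix y assume "y \<in> U \<inter> A_map v i ` lattice_cone v i"
    then obtain n where "n \<in> lattice_cone v i" "y = A_map v i n" "y \<in> U"
      by blast
    have "0 < v k \<bullet> n \<and> v k \<bullet> n < \<delta>" if "k \<noteq> i" for k
      using \<open>y \<in> U\<close> that unfolding \<open>y = A_map v i n\<close> by (simp add: U_def A_map_def)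
    with \<open>n \<in> lattice_cone v i\<close> have "n \<in> lattice_slab v i \<delta>"
      by (simp add: lattice_cone_def lattice_slab_def)
    with \<open>y = A_map v i n\<close> show "y \<in> A_map v i ` lattice_slab v i \<delta>"
      by blast
  qed
  ultimately show ?thesis
    using finite_subset by blast
next
  case False
  then have "lattice_slab v i \<delta> = int_lattice"
    by (auto simp: lattice_slab_def)
  then show ?thesis
    using infinite_int_lattice by simp
qed

lemma lattice_slab_unbounded:
  fixes v :: "'d::finite \<Rightarrow> real^'d"
  assumes "span (range v) = UNIV"
    and "completely_irrational_without v i" and "\<delta> > 0"
  shows "\<exists>n \<in> lattice_slab v i \<delta>. \<bar>v i \<bullet> n\<bar> > R"
proof (rule ccontr)
  assume bounded_i: "\<not> ?thesis"
  have "\<bar>v k \<bullet> n\<bar> \<le> max R \<delta>" if "n \<in> lattice_slab v i \<delta>" for n k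
  proof (cases "k = i")
    case True
    then show ?thesis
      using bounded_i that by (auto simp: not_less)
  next
    case False
    then have "0 < v k \<bullet> n \<and> v k \<bullet> n < \<delta>"
      using that by (simp add: lattice_slab_def)
    then show ?thesis
      by (simp add: le_max_iff_disj)
  qed
  then have "lattice_slab v i \<delta> \<subseteq> int_lattice \<inter> {x. \<forall>k. \<bar>v k \<bullet> x\<bar> \<le> max R \<delta>}"
    by (auto simp: lattice_slab_def)
  moreover have "finite (int_lattice \<inter> {x. \<forall>k. \<bar>v k \<bullet> x\<bar> \<le> max R \<delta>})"
    by (rule finite_int_lattice_Int_bounded[OF bounded_inner_le[OF assms(1)]])
  ultimately show False
    using infinite_lattice_slab[OF assms(2,3)] finite_subset by blast
qed

lemma lattice_point_in_box:
  fixes v :: "'d::finite \<Rightarrow> real^'d"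
  assumes "completely_irrational_without v i" and "0 \<le> a" and "a < b"
  obtains m where "m \<in> int_lattice" and "\<And>k. k \<noteq> i \<Longrightarrow> a < v k \<bullet> m \<and> v k \<bullet> m < b"
proof -
  define x where "x = (\<chi> k. if k = i then 0 else (a + b) / 2)"
  have "x \<in> closure (A_map v i ` lattice_cone v i)"
    using assms unfolding completely_irrational_without_def
    by (simp add: x_def nonneg_orthant_without_def)
  then obtain y where "y \<in> A_map v i ` lattice_cone v i" "dist y x < (b - a) / 2"
    using closure_approachable \<open>a < b\<close> by (metis diff_gt_0_iff_gt half_gt_zero)
  then obtain m where m: "m \<in> lattice_cone v i" "dist (A_map v i m) x < (b - a) / 2"
    by blast
  have "a < v k \<bullet> m \<and> v k \<bullet> m < b" if "k \<noteq> i" for k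
  proof -
    have "\<bar>v k \<bullet> m - (a + b) / 2\<bar> < (b - a) / 2"
      using m(2) component_le_norm_cart[of "A_map v i m - x" k] that
      by (simp add: dist_norm A_map_def x_def)
    then show ?thesis
      unfolding abs_less_iff by argo
  qed
  moreover have "m \<in> int_lattice"
    using m(1) by (simp add: lattice_cone_def)
  ultimately show thesis
    using that by blast
qed

lemma int_lattice_diff: "m \<in> int_lattice \<Longrightarrow> n \<in> int_lattice \<Longrightarrow> m - n \<in> int_lattice"
  by (simp add: int_lattice_def)

lemma lattice_slab_mono: "\<delta> \<le> \<epsilon> \<Longrightarrow> lattice_slab v i \<delta> \<subseteq> lattice_slab v i \<epsilon>"
  unfolding lattice_slab_def by auto

lemma lattice_slab_diff:
  assumes "m \<in> int_lattice" and "\<And>k. k \<noteq> i \<Longrightarrow> \<delta> \<le> v k \<bullet> m \<and> v k \<bullet> m < \<epsilon>"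
    and "n \<in> lattice_slab v i \<delta>"
  shows "m - n \<in> lattice_slab v i \<epsilon>"
proof -
  have "0 < v k \<bullet> (m - n) \<and> v k \<bullet> (m - n) < \<epsilon>" if "k \<noteq> i" for k
  proof -
    have "0 < v k \<bullet> n \<and> v k \<bullet> n < \<delta>"
      using assms(3) that by (simp add: lattice_slab_def)
    then show ?thesis
      using assms(2)[OF that] by (simp add: inner_diff_right)
  qed
  moreover have "m - n \<in> int_lattice"
    using assms(1,3) by (simp add: lattice_slab_def int_lattice_diff)
  ultimately show ?thesis
    by (simp add: lattice_slab_def)
qed

lemma Lambda_set_eq: "Lambda_set v M \<epsilon> i = {n \<in> lattice_slab v i \<epsilon>. M < v i \<bullet> n}"
  by (auto simp: Lambda_set_def lattice_slab_def)

theorem mainTheorem17: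
  fixes v :: "'d::finite \<Rightarrow> real^'d"
  assumes inj: "inj v"
    and indep: "independent (range v)"
    and unit: "\<And>k. norm (v k) = 1"
    and ci: "\<And>i. completely_irrational_without v i"
  shows "\<forall>i M \<epsilon>. M > 0 \<longrightarrow> \<epsilon> > 0 \<longrightarrow> Lambda_set v M \<epsilon> i \<noteq> {}"
proof (intro allI impI)
  fix i :: 'd and M \<epsilon> :: real assume "M > 0" and "\<epsilon> > 0"
  then have "\<epsilon> / 4 > 0" by simp
  obtain m where m: "m \<in> int_lattice" and m_box: "\<And>k. k \<noteq> i \<Longrightarrow> \<epsilon> / 4 < v k \<bullet> m \<and> v k \<bullet> m < \<epsilon>"
    using lattice_point_in_box[OF ci, of "\<epsilon> / 4" \<epsilon>] \<open>\<epsilon> > 0\<close> by auto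
  obtain n where n: "n \<in> lattice_slab v i (\<epsilon> / 4)" and n_large: "\<bar>v i \<bullet> n\<bar> > M + \<bar>v i \<bullet> m\<bar>"
    using lattice_slab_unbounded[OF span_range_eq_UNIV[OF inj indep] ci \<open>\<epsilon> / 4 > 0\<close>] by blast
  have "n \<in> lattice_slab v i \<epsilon>"
    using lattice_slab_mono[of "\<epsilon> / 4" \<epsilon>] n \<open>\<epsilon> > 0\<close> by auto
  moreover have "m - n \<in> lattice_slab v i \<epsilon>"
    using lattice_slab_diff[OF m _ n] m_box by (simp add: less_imp_le)
  moreover have "M < v i \<bullet> n \<or> M < v i \<bullet> (m - n)"
    using n_large by (simp add: inner_diff_right abs_real_def split: if_splits)
  ultimately show "Lambda_set v M \<epsilon> i \<noteq> {}"
    unfolding Lambda_set_eq by blast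
qed

end
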